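(* Let $A$ be an associative unital ring and $\mathfrak{C}$ an $A$-coring with coproduct $\Delta$ and counit $\varepsilon$ (Sweedler notation $\Delta(c)=c_{(1)}\otimes_A c_{(2)}$). Consider pairs $(\pi,\Theta)$, where $\Theta:A\to\mathfrak{C}$ is an $(A,A)$-bimodule map and $\pi:\mathfrak{C}\otimes_A\mathfrak{C}\to\mathfrak{C}$ is an $(A,A)$-bimodule map which is a $(\mathfrak{C},\mathfrak{C})$-bicomodule map, i.e. $c_{(1)}\otimes_A\pi(c_{(2)}\otimes_A c')=\Delta(\pi(c\otimes_A c'))=\pi(c\otimes_A c'_{(1)})\otimes_A c'_{(2)}$ for all $c,c'\in\mathfrak{C}$, such that $\pi\circ(I_{\mathfrak{C}}\otimes_A\Theta)=\pi\circ(\Theta\otimes_A I_{\mathfrak{C}})=I_{\mathfrak{C}}$ (using the identifications $\mathfrak{C}\cong\mathfrak{C}\otimes_A A\cong A\otimes_A\mathfrak{C}$). Consider also reduced Frobenius systems $(\gamma,e)$ for $\mathfrak{C}$, i.e. pairs consisting of an element $e\in\mathfrak{C}^A=\{c\in\mathfrak{C}\mid ac=ca\ \forall a\in A\}$ and an $(A,A)$-bimodule map $\gamma:\mathfrak{C}\otimes_A\mathfrak{C}\to A$ such that for all $c,c'\in\mathfrak{C}$: $c_{(1)}\gamma(c_{(2)}\otimes_A c')=\gamma(c\otimes_A c'_{(1)})c'_{(2)}$ and $\gamma(c\otimes_A e)=\gamma(e\otimes_A c)=\varepsilon(c)$. Then the pairs $(\pi,\Theta)$ are in one-to-one correspondence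 with the reduced Frobenius systems $(\gamma,e)$, via $(\pi,\Theta)\mapsto(\varepsilon\circ\pi,\Theta(1_A))$.
   Context: An $A$-coring $\mathfrak{C}$ is an $(A,A)$-bimodule with $(A,A)$-bimodule maps $\Delta:\mathfrak{C}\to\mathfrak{C}\otimes_A\mathfrak{C}$ and $\varepsilon:\mathfrak{C}\to A$ satisfying coassociativity $(I_{\mathfrak{C}}\otimes_A\Delta)\circ\Delta=(\Delta\otimes_A I_{\mathfrak{C}})\circ\Delta$ and counitality $(I_{\mathfrak{C}}\otimes_A\varepsilon)\circ\Delta=(\varepsilon\otimes_A I_{\mathfrak{C}})\circ\Delta=I_{\mathfrak{C}}$. The $(\mathfrak{C},\mathfrak{C})$-bicomodule structures are: on $\mathfrak{C}$ both coactions are $\Delta$; on $\mathfrak{C}\otimes_A\mathfrak{C}$ the left coaction is $\Delta\otimes_A I_{\mathfrak{C}}$ and the right coaction is $I_{\mathfrak{C}}\otimes_A\Delta$. *)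

theory Defs
  imports Main
begin

definition is_bimodule :: "('a::ring_1 \<Rightarrow> 'm::ab_group_add \<Rightarrow> 'm) \<Rightarrow> ('m \<Rightarrow> 'a \<Rightarrow> 'm) \<Rightarrow> bool" where
  "is_bimodule l r \<longleftrightarrow>
     (\<forall>a x y. l a (x + y) = l a x + l a y) \<and> (\<forall>a b x. l (a + b) x = l a x + l b x) \<and>
     (\<forall>a b x. l (a * b) x = l a (l b x)) \<and> (\<forall>x. l 1 x = x) \<and>
     (\<forall>a x y. r (x + y) a = r x a + r y a) \<and> (\<forall>a b x. r x (a + b) = r x a + r x b) \<and>
     (\<forall>a b x. r x (a * b) = r (r x a) b) \<and> (\<forall>x. r x 1 = x) \<and>
     (\<forall>a x b. r (l a x) b = l a (r x b))"

definition bimod_hom ::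
  "('a::ring_1 \<Rightarrow> 'm::ab_group_add \<Rightarrow> 'm) \<Rightarrow> ('m \<Rightarrow> 'a \<Rightarrow> 'm) \<Rightarrow>
   ('a \<Rightarrow> 'n::ab_group_add \<Rightarrow> 'n) \<Rightarrow> ('n \<Rightarrow> 'a \<Rightarrow> 'n) \<Rightarrow> ('m \<Rightarrow> 'n) \<Rightarrow> bool" where
  "bimod_hom l1 r1 l2 r2 f \<longleftrightarrow>
     (\<forall>x y. f (x + y) = f x + f y) \<and> (\<forall>a x. f (l1 a x) = l2 a (f x)) \<and> (\<forall>x a. f (r1 x a) = r2 (f x) a)"

definition balanced :: "('m::ab_group_add \<Rightarrow> 'a::ring_1 \<Rightarrow> 'm) \<Rightarrow> ('a \<Rightarrow> 'n::ab_group_add \<Rightarrow> 'n)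
     \<Rightarrow> ('m \<Rightarrow> 'n \<Rightarrow> 'g::ab_group_add) \<Rightarrow> bool" where
  "balanced rM lN \<phi> \<longleftrightarrow>
     (\<forall>x x' y. \<phi> (x + x') y = \<phi> x y + \<phi> x' y) \<and> (\<forall>x y y'. \<phi> x (y + y') = \<phi> x y + \<phi> x y') \<and>
     (\<forall>x a y. \<phi> (rM x a) y = \<phi> x (lN a y))"

definition zmul :: "int \<Rightarrow> 'g::ab_group_add \<Rightarrow> 'g" where
  "zmul k x = (if 0 \<le> k then (\<Sum>i<nat k. x) else - (\<Sum>i<nat (- k). x))"

text \<open>Basis elements of the free abelian group on M \<times> N (finitely supported int-valued functions).\<close>
definition delta :: "'p \<Rightarrow> 'p \<Rightarrow> int" where
  "delta p = (\<lambda>q. if q = p then 1 else 0)"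

inductive_set trel :: "('m::ab_group_add \<Rightarrow> 'a::ring_1 \<Rightarrow> 'm) \<Rightarrow> ('a \<Rightarrow> 'n::ab_group_add \<Rightarrow> 'n)
     \<Rightarrow> ('m \<times> 'n \<Rightarrow> int) set"
  for rM lN where
    trel_zero: "(\<lambda>q. 0) \<in> trel rM lN"
  | trel_diff: "f \<in> trel rM lN \<Longrightarrow> g \<in> trel rM lN \<Longrightarrow> (\<lambda>q. f q - g q) \<in> trel rM lN"
  | trel_addl: "(\<lambda>q. delta (x + x', y) q - delta (x, y) q - delta (x', y) q) \<in> trel rM lN"
  | trel_addr: "(\<lambda>q. delta (x, y + y') q - delta (x, y) q - delta (x, y') q) \<in> trel rM lN"
  | trel_bal: "(\<lambda>q. delta (rM x a, y) q - delta (x, lN a y) q) \<in> trel rM lN"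

definition fsum :: "('m \<Rightarrow> 'n \<Rightarrow> 't::ab_group_add) \<Rightarrow> ('m \<times> 'n \<Rightarrow> int) \<Rightarrow> 't" where
  "fsum tens f = (\<Sum>p\<in>{p. f p \<noteq> 0}. zmul (f p) (tens (fst p) (snd p)))"

text \<open>(T, lT, rT, tens) is a tensor product M \<otimes>_A N of the bimodules M and N, with x \<otimes> y = tens x y:
  tens is balanced biadditive, T is generated by pure tensors, and the kernel of the canonical map from
  the free abelian group on M \<times> N onto T is exactly the relation subgroup; the bimodule structure of T
  is a(x \<otimes> y)b = (ax) \<otimes> (yb).\<close>
definition is_tensor ::
  "('a::ring_1 \<Rightarrow> 'm::ab_group_add \<Rightarrow> 'm) \<Rightarrow> ('m \<Rightarrow> 'a \<Rightarrow> 'm) \<Rightarrow>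
   ('a \<Rightarrow> 'n::ab_group_add \<Rightarrow> 'n) \<Rightarrow> ('n \<Rightarrow> 'a \<Rightarrow> 'n) \<Rightarrow>
   ('a \<Rightarrow> 't::ab_group_add \<Rightarrow> 't) \<Rightarrow> ('t \<Rightarrow> 'a \<Rightarrow> 't) \<Rightarrow> ('m \<Rightarrow> 'n \<Rightarrow> 't) \<Rightarrow> bool" where
  "is_tensor lM rM lN rN lT rT tens \<longleftrightarrow>
     is_bimodule lT rT \<and> balanced rM lN tens \<and>
     (\<forall>a x y. lT a (tens x y) = tens (lM a x) y) \<and>
     (\<forall>x y a. rT (tens x y) a = tens x (rN y a)) \<and>
     (\<forall>t. \<exists>xs. t = sum_list (map (\<lambda>(x, y). tens x y) xs)) \<and>
     (\<forall>f. finite {p. f p \<noteq> 0} \<and> fsum tens f = 0 \<longrightarrow> f \<in> trel rM lN)"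

text \<open>The additive map T \<rightarrow> G induced by a balanced biadditive map \<phi>: x \<otimes> y \<mapsto> \<phi> x y
  (well defined when T is a tensor product and \<phi> is balanced).\<close>
definition tlift :: "('m \<Rightarrow> 'n \<Rightarrow> 't::ab_group_add) \<Rightarrow> ('m \<Rightarrow> 'n \<Rightarrow> 'g::ab_group_add) \<Rightarrow> 't \<Rightarrow> 'g" where
  "tlift tens \<phi> t = (SOME g. \<exists>xs. t = sum_list (map (\<lambda>(x, y). tens x y) xs) \<and>
                                   g = sum_list (map (\<lambda>(x, y). \<phi> x y) xs))"

text \<open>C (with actions lC, rC) is an A-coring with coproduct \<Delta> : C \<rightarrow> C \<otimes>_A C (= T, via tens) and
  counit \<epsilon>; coassociativity is stated in C \<otimes>_A (C \<otimes>_A C) (= L, via tensL), identifying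
  (C \<otimes> C) \<otimes> C with C \<otimes> (C \<otimes> C); counitality uses C \<otimes>_A A \<cong> C \<cong> A \<otimes>_A C.\<close>
definition is_coring ::
  "('a::ring_1 \<Rightarrow> 'c::ab_group_add \<Rightarrow> 'c) \<Rightarrow> ('c \<Rightarrow> 'a \<Rightarrow> 'c) \<Rightarrow>
   ('a \<Rightarrow> 't::ab_group_add \<Rightarrow> 't) \<Rightarrow> ('t \<Rightarrow> 'a \<Rightarrow> 't) \<Rightarrow> ('c \<Rightarrow> 'c \<Rightarrow> 't) \<Rightarrow>
   ('a \<Rightarrow> 'l::ab_group_add \<Rightarrow> 'l) \<Rightarrow> ('l \<Rightarrow> 'a \<Rightarrow> 'l) \<Rightarrow> ('c \<Rightarrow> 't \<Rightarrow> 'l) \<Rightarrow>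
   ('c \<Rightarrow> 't) \<Rightarrow> ('c \<Rightarrow> 'a) \<Rightarrow> bool" where
  "is_coring lC rC lT rT tens lL rL tensL \<Delta> \<epsilon> \<longleftrightarrow>
     is_bimodule lC rC \<and>
     is_tensor lC rC lC rC lT rT tens \<and>
     is_tensor lC rC lT rT lL rL tensL \<and>
     bimod_hom lC rC lT rT \<Delta> \<and>
     bimod_hom lC rC (*) (*) \<epsilon> \<and>
     (\<forall>c. tlift tens (\<lambda>x y. tensL x (\<Delta> y)) (\<Delta> c) =
          tlift tens (\<lambda>x y. tlift tens (\<lambda>u v. tensL u (tens v y)) (\<Delta> x)) (\<Delta> c)) \<and>
     (\<forall>c. tlift tens (\<lambda>x y. rC x (\<epsilon> y)) (\<Delta> c) = c) \<and>
     (\<forall>c. tlift tens (\<lambda>x y. lC (\<epsilon> x) y) (\<Delta> c) = c)"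

definition pi_theta_pair ::
  "('a::ring_1 \<Rightarrow> 'c::ab_group_add \<Rightarrow> 'c) \<Rightarrow> ('c \<Rightarrow> 'a \<Rightarrow> 'c) \<Rightarrow>
   ('a \<Rightarrow> 't::ab_group_add \<Rightarrow> 't) \<Rightarrow> ('t \<Rightarrow> 'a \<Rightarrow> 't) \<Rightarrow> ('c \<Rightarrow> 'c \<Rightarrow> 't) \<Rightarrow>
   ('c \<Rightarrow> 't) \<Rightarrow> ('t \<Rightarrow> 'c) \<Rightarrow> ('a \<Rightarrow> 'c) \<Rightarrow> bool" where
  "pi_theta_pair lC rC lT rT tens \<Delta> \<pi> \<Theta> \<longleftrightarrow>
     bimod_hom (*) (*) lC rC \<Theta> \<and>
     bimod_hom lT rT lC rC \<pi> \<and>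
     (\<forall>c c'. tlift tens (\<lambda>x y. tens x (\<pi> (tens y c'))) (\<Delta> c) = \<Delta> (\<pi> (tens c c')) \<and>
             \<Delta> (\<pi> (tens c c')) = tlift tens (\<lambda>x y. tens (\<pi> (tens c x)) y) (\<Delta> c')) \<and>
     (\<forall>c. \<pi> (tens c (\<Theta> 1)) = c) \<and> (\<forall>c. \<pi> (tens (\<Theta> 1) c) = c)"

definition reduced_frobenius_system ::
  "('a::ring_1 \<Rightarrow> 'c::ab_group_add \<Rightarrow> 'c) \<Rightarrow> ('c \<Rightarrow> 'a \<Rightarrow> 'c) \<Rightarrow>
   ('a \<Rightarrow> 't::ab_group_add \<Rightarrow> 't) \<Rightarrow> ('t \<Rightarrow> 'a \<Rightarrow> 't) \<Rightarrow> ('c \<Rightarrow> 'c \<Rightarrow> 't) \<Rightarrow>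
   ('c \<Rightarrow> 't) \<Rightarrow> ('c \<Rightarrow> 'a) \<Rightarrow> ('t \<Rightarrow> 'a) \<Rightarrow> 'c \<Rightarrow> bool" where
  "reduced_frobenius_system lC rC lT rT tens \<Delta> \<epsilon> \<gamma> e \<longleftrightarrow>
     (\<forall>a. lC a e = rC e a) \<and>
     bimod_hom lT rT (*) (*) \<gamma> \<and>
     (\<forall>c c'. tlift tens (\<lambda>x y. rC x (\<gamma> (tens y c'))) (\<Delta> c) =
             tlift tens (\<lambda>x y. lC (\<gamma> (tens c x)) y) (\<Delta> c')) \<and>
     (\<forall>c. \<gamma> (tens c e) = \<epsilon> c) \<and> (\<forall>c. \<gamma> (tens e c) = \<epsilon> c)"

end

(*
  Write c_(1) \<otimes> c_(2) for \<Delta>(c).  For a pair (\<pi>, \<Theta>), applying the counit to the two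
  colinearity conditions gives
    \<pi>(c \<otimes> c') = c_(1) \<gamma>(c_(2) \<otimes> c') = \<gamma>(c \<otimes> c'_(1)) c'_(2)   with \<gamma> = \<epsilon> \<circ> \<pi>;
  this is the Frobenius condition for (\<gamma>, \<Theta> 1), and it recovers \<pi> from \<gamma>, while
  \<Theta> a = a \<Theta>(1).  Conversely, a reduced Frobenius system (\<gamma>, e) defines \<pi> by the same
  formula: its two expressions, combined with coassociativity, give left and right colinearity,
  and \<gamma>(c \<otimes> e) = \<gamma>(e \<otimes> c) = \<epsilon>(c) together with counitality give the unit laws.
  Maps out of tensor products come from balanced maps via the universal property (tlift), whose
  uniqueness half also identifies additive maps that agree on elementary tensors.
*)
theory Submission
  imports Defs "HOL.Modules"
begin

lemma sum_lessThan_const_add: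
  "(\<Sum>i<m + n. x) = (\<Sum>i<m. x) + (\<Sum>i<n. x :: 'g::ab_group_add)" for m n :: nat
  by (induction n) (simp_all add: add.assoc)

lemma zmul_0 [simp]: "zmul 0 x = 0"
  by (simp add: zmul_def)

lemma zmul_1 [simp]: "zmul 1 x = x"
  by (simp add: zmul_def)

lemma zmul_add: "zmul (k + l) x = zmul k x + zmul l x"
proof -
  have zmul_eq: "zmul k x = (\<Sum>i<nat k. x) - (\<Sum>i<nat (- k). x)" for k
    by (simp add: zmul_def)
  have "nat (k + l) + nat (- k) + nat (- l) = nat (- (k + l)) + nat k + nat l"
    by simp
  then have "(\<Sum>i<nat (k + l). x) + (\<Sum>i<nat (- k). x) + (\<Sum>i<nat (- l). x)
      = (\<Sum>i<nat (- (k + l)). x) + (\<Sum>i<nat k. x) + (\<Sum>i<nat l. x)"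
    by (metis sum_lessThan_const_add)
  then show ?thesis
    unfolding zmul_eq by (simp add: algebra_simps)
qed

lemma finite_support_diff:
  "finite {p. f p \<noteq> 0} \<Longrightarrow> finite {p. g p \<noteq> 0} \<Longrightarrow> finite {p. f p - g p \<noteq> (0::int)}"
  by (rule finite_subset[of _ "{p. f p \<noteq> 0} \<union> {p. g p \<noteq> 0}"]) auto

lemma support_delta: "{q. delta p q \<noteq> 0} = {p}"
  by (auto simp: delta_def)

lemma fsum_add:
  assumes "finite {p. f p \<noteq> 0}" "finite {p. g p \<noteq> 0}"
  shows "fsum h (\<lambda>q. f q + g q) = fsum h f + fsum h g"
proof -
  let ?S = "{p. f p \<noteq> 0} \<union> {p. g p \<noteq> 0}"
  have fsum_eq: "fsum h u = (\<Sum>p\<in>?S. zmul (u p) (h (fst p) (snd p)))"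
    if "{p. u p \<noteq> 0} \<subseteq> ?S" for u
    unfolding fsum_def by (rule sum.mono_neutral_left) (use assms that in auto)
  show ?thesis
    by (subst (1 2 3) fsum_eq) (auto simp: zmul_add sum.distrib)
qed

lemma fsum_diff:
  assumes "finite {p. f p \<noteq> 0}" "finite {p. g p \<noteq> 0}"
  shows "fsum h (\<lambda>q. f q - g q) = fsum h f - fsum h g"
  using fsum_add[OF finite_support_diff[OF assms] assms(2), of h] by simp

lemma fsum_delta: "fsum h (delta p) = h (fst p) (snd p)"
  by (simp add: fsum_def support_delta delta_def)

definition sum_pairs :: "('m \<Rightarrow> 'n \<Rightarrow> 'g::ab_group_add) \<Rightarrow> ('m \<times> 'n) list \<Rightarrow> 'g" where
  "sum_pairs \<phi> xs = sum_list (map (\<lambda>(x, y). \<phi> x y) xs)"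

lemma fsum_count_list: "fsum h (\<lambda>q. int (count_list xs q)) = sum_pairs h xs"
proof (induction xs)
  case Nil
  then show ?case by (simp add: fsum_def sum_pairs_def)
next
  case (Cons p xs)
  have "finite {q. int (count_list xs q) \<noteq> 0}"
    by (rule finite_subset[of _ "set xs"]) (auto simp: count_list_0_iff)
  moreover have "(\<lambda>q. int (count_list (p # xs) q)) = (\<lambda>q. delta p q + int (count_list xs q))"
    by (auto simp: delta_def)
  ultimately show ?case
    using Cons by (simp add: fsum_add support_delta fsum_delta sum_pairs_def split: prod.splits)
qed

lemma fsum_trel_eq_0:
  assumes "balanced rM lN \<phi>" and "f \<in> trel rM lN"
  shows "finite {p. f p \<noteq> 0} \<and> fsum \<phi> f = 0"
  using assms(2)
proof induction
  case trel_zero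
  then show ?case by (simp add: fsum_def)
next
  case (trel_diff f g)
  then show ?case
    by (simp del: right_minus_eq add: fsum_diff finite_support_diff)
qed (use assms(1) in \<open>simp_all del: right_minus_eq
       add: fsum_diff finite_support_diff support_delta fsum_delta balanced_def\<close>)

section \<open>Maps out of a tensor product\<close>

lemma sum_pairs_append: "sum_pairs \<phi> (xs @ ys) = sum_pairs \<phi> xs + sum_pairs \<phi> ys"
  by (simp add: sum_pairs_def)

lemma (in additive) sum_pairs: "f (sum_pairs \<phi> xs) = sum_pairs (\<lambda>x y. f (\<phi> x y)) xs"
  by (induction xs) (auto simp: sum_pairs_def zero add)

lemma additive_comp: "additive f \<Longrightarrow> additive g \<Longrightarrow> additive (\<lambda>x. f (g x))"
  by (simp add: additive_def)

lemma additive_bimodule_actions: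
  assumes "is_bimodule l r"
  shows "additive (l a)" and "additive (\<lambda>x. r x a)"
  using assms by (simp_all add: additive_def is_bimodule_def)

lemma tensor_actions:
  assumes "is_tensor lM rM lN rN lT rT tens"
  shows "lT a (tens x y) = tens (lM a x) y" and "rT (tens x y) a = tens x (rN y a)"
  using assms by (simp_all add: is_tensor_def)

lemma additive_tensor_actions:
  assumes "is_tensor lM rM lN rN lT rT tens"
  shows "additive (lT a)" and "additive (\<lambda>t. rT t a)"
  using assms unfolding is_tensor_def by (blast intro: additive_bimodule_actions)+

lemma tensor_sum_pairs_exists:
  "is_tensor lM rM lN rN lT rT tens \<Longrightarrow> \<exists>xs. t = sum_pairs tens xs"
  unfolding is_tensor_def sum_pairs_def by blast

lemma sum_pairs_balanced_cong:
  assumes T: "is_tensor lM rM lN rN lT rT tens" and \<phi>: "balanced rM lN \<phi>"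
    and eq: "sum_pairs tens xs = sum_pairs tens ys"
  shows "sum_pairs \<phi> xs = sum_pairs \<phi> ys"
proof -
  let ?n = "\<lambda>xs q. int (count_list xs q)"
  have fin_zs: "finite {q. ?n zs q \<noteq> 0}" for zs :: "('m \<times> 'n) list"
    by (rule finite_subset[of _ "set zs"]) (auto simp: count_list_0_iff)
  note fin = fin_zs[of xs] fin_zs[of ys]
  have kernel: "f \<in> trel rM lN" if "finite {p. f p \<noteq> 0}" "fsum tens f = 0" for f
    using T that unfolding is_tensor_def by blast
  have "(\<lambda>q. ?n xs q - ?n ys q) \<in> trel rM lN"
    by (rule kernel[OF finite_support_diff[OF fin]])
      (use eq in \<open>simp add: fsum_diff[OF fin] fsum_count_list\<close>)
  then have "fsum \<phi> (\<lambda>q. ?n xs q - ?n ys q) = 0"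
    using fsum_trel_eq_0[OF \<phi>] by blast
  then show ?thesis
    by (simp add: fsum_diff[OF fin] fsum_count_list)
qed

lemma tlift_eqI:
  assumes "\<exists>xs. t = sum_pairs tens xs"
    and "\<And>xs. t = sum_pairs tens xs \<Longrightarrow> sum_pairs \<phi> xs = v"
  shows "tlift tens \<phi> t = v"
  unfolding tlift_def sum_pairs_def[symmetric]
  by (rule some_equality) (use assms in auto)

lemma tlift_sum_pairs:
  assumes T: "is_tensor lM rM lN rN lT rT tens" and \<phi>: "balanced rM lN \<phi>"
  shows "tlift tens \<phi> (sum_pairs tens xs) = sum_pairs \<phi> xs"
  by (rule tlift_eqI) (auto intro: sum_pairs_balanced_cong[OF T \<phi>])

lemma tlift_tens:
  assumes "is_tensor lM rM lN rN lT rT tens" and "balanced rM lN \<phi>"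
  shows "tlift tens \<phi> (tens x y) = \<phi> x y"
  using tlift_sum_pairs[OF assms, of "[(x, y)]"] by (simp add: sum_pairs_def)

lemma additive_tlift:
  assumes T: "is_tensor lM rM lN rN lT rT tens" and \<phi>: "balanced rM lN \<phi>"
  shows "additive (tlift tens \<phi>)"
proof
  fix s t
  obtain xs ys where "s = sum_pairs tens xs" and "t = sum_pairs tens ys"
    using tensor_sum_pairs_exists[OF T] by metis
  then show "tlift tens \<phi> (s + t) = tlift tens \<phi> s + tlift tens \<phi> t"
    by (simp add: tlift_sum_pairs[OF T \<phi>] flip: sum_pairs_append)
qed

text \<open>Uniqueness half of the universal property; it needs no balancedness, since an additive
  map that extends \<open>\<phi>\<close> already witnesses that \<open>\<phi>\<close> is well defined on the tensor product.\<close>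
lemma tlift_unique:
  assumes T: "is_tensor lM rM lN rN lT rT tens" and f: "additive f"
    and ext: "\<And>x y. f (tens x y) = \<phi> x y"
  shows "tlift tens \<phi> t = f t"
proof (rule tlift_eqI)
  show "\<exists>xs. t = sum_pairs tens xs"
    by (rule tensor_sum_pairs_exists[OF T])
  show "sum_pairs \<phi> xs = f t" if "t = sum_pairs tens xs" for xs
    using that by (simp add: additive.sum_pairs[OF f] ext)
qed

lemma tensor_additive_ext:
  assumes T: "is_tensor lM rM lN rN lT rT tens" and "additive f" "additive g"
    and "\<And>x y. f (tens x y) = g (tens x y)"
  shows "f t = g t"
  using tlift_unique[OF T, of f "\<lambda>x y. f (tens x y)" t] tlift_unique[OF T, of g "\<lambda>x y. f (tens x y)" t]
    assms by simp

lemma tlift_comp: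
  assumes T: "is_tensor lM rM lN rN lT rT tens" and \<phi>: "balanced rM lN \<phi>" and g: "additive g"
  shows "g (tlift tens \<phi> t) = tlift tens (\<lambda>x y. g (\<phi> x y)) t"
  using tlift_unique[OF T additive_comp[OF g additive_tlift[OF T \<phi>]], of "\<lambda>x y. g (\<phi> x y)" t]
  by (simp add: tlift_tens[OF T \<phi>])

lemma tlift_add_fun:
  assumes T: "is_tensor lM rM lN rN lT rT tens"
    and \<phi>: "balanced rM lN \<phi>" and \<psi>: "balanced rM lN \<psi>"
  shows "tlift tens (\<lambda>x y. \<phi> x y + \<psi> x y) t = tlift tens \<phi> t + tlift tens \<psi> t"
proof (rule tlift_unique[OF T, where f = "\<lambda>t. tlift tens \<phi> t + tlift tens \<psi> t"])
  show "additive (\<lambda>t. tlift tens \<phi> t + tlift tens \<psi> t)"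
    using additive_tlift[OF T \<phi>] additive_tlift[OF T \<psi>] by (simp add: additive_def)
qed (simp add: tlift_tens[OF T \<phi>] tlift_tens[OF T \<psi>])

lemma tlift_left_action:
  assumes T: "is_tensor lM rM lN rN lT rT tens" and \<phi>: "balanced rM lN \<phi>"
  shows "tlift tens \<phi> (lT a t) = tlift tens (\<lambda>x y. \<phi> (lM a x) y) t"
proof (rule tlift_unique[OF T, where f = "\<lambda>t. tlift tens \<phi> (lT a t)", symmetric])
  show "additive (\<lambda>t. tlift tens \<phi> (lT a t))"
    by (rule additive_comp[OF additive_tlift[OF T \<phi>] additive_tensor_actions(1)[OF T]])
qed (simp add: tensor_actions[OF T] tlift_tens[OF T \<phi>])

lemma tlift_right_action:
  assumes T: "is_tensor lM rM lN rN lT rT tens" and \<phi>: "balanced rM lN \<phi>"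
  shows "tlift tens \<phi> (rT t a) = tlift tens (\<lambda>x y. \<phi> x (rN y a)) t"
proof (rule tlift_unique[OF T, where f = "\<lambda>t. tlift tens \<phi> (rT t a)", symmetric])
  show "additive (\<lambda>t. tlift tens \<phi> (rT t a))"
    by (rule additive_comp[OF additive_tlift[OF T \<phi>] additive_tensor_actions(2)[OF T]])
qed (simp add: tensor_actions[OF T] tlift_tens[OF T \<phi>])

locale coring =
  fixes lC :: "'a::ring_1 \<Rightarrow> 'c::ab_group_add \<Rightarrow> 'c" and rC :: "'c \<Rightarrow> 'a \<Rightarrow> 'c"
    and lT :: "'a \<Rightarrow> 't::ab_group_add \<Rightarrow> 't" and rT :: "'t \<Rightarrow> 'a \<Rightarrow> 't"
    and tens :: "'c \<Rightarrow> 'c \<Rightarrow> 't"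
    and lL :: "'a \<Rightarrow> 'l::ab_group_add \<Rightarrow> 'l" and rL :: "'l \<Rightarrow> 'a \<Rightarrow> 'l"
    and tensL :: "'c \<Rightarrow> 't \<Rightarrow> 'l"
    and \<Delta> :: "'c \<Rightarrow> 't" and \<epsilon> :: "'c \<Rightarrow> 'a"
  assumes coring: "is_coring lC rC lT rT tens lL rL tensL \<Delta> \<epsilon>"
begin

lemma tensor_CC: "is_tensor lC rC lC rC lT rT tens"
  using coring by (simp add: is_coring_def)

lemma tensor_CT: "is_tensor lC rC lT rT lL rL tensL"
  using coring by (simp add: is_coring_def)

lemma coassoc:
  "tlift tens (\<lambda>x y. tensL x (\<Delta> y)) (\<Delta> c) =
   tlift tens (\<lambda>x y. tlift tens (\<lambda>u v. tensL u (tens v y)) (\<Delta> x)) (\<Delta> c)"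
  using coring by (simp add: is_coring_def)

lemma counit_right: "tlift tens (\<lambda>x y. rC x (\<epsilon> y)) (\<Delta> c) = c"
  using coring by (simp add: is_coring_def)

lemma counit_left: "tlift tens (\<lambda>x y. lC (\<epsilon> x) y) (\<Delta> c) = c"
  using coring by (simp add: is_coring_def)

lemma bimodule_C:
  "lC a (x + y) = lC a x + lC a y" "lC (a + b) x = lC a x + lC b x"
  "lC (a * b) x = lC a (lC b x)" "lC 1 x = x"
  "rC (x + y) a = rC x a + rC y a" "rC x (a + b) = rC x a + rC x b"
  "rC x (a * b) = rC (rC x a) b" "rC x 1 = x" "rC (lC a x) b = lC a (rC x b)"
  using coring by (simp_all add: is_coring_def is_bimodule_def)

lemma bimodule_T:
  "lT a (s + t) = lT a s + lT a t" "lT (a + b) s = lT a s + lT b s"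
  "lT (a * b) s = lT a (lT b s)" "lT 1 s = s"
  "rT (s + t) a = rT s a + rT t a" "rT s (a + b) = rT s a + rT s b"
  "rT s (a * b) = rT (rT s a) b" "rT s 1 = s" "rT (lT a s) b = lT a (rT s b)"
  using tensor_CC by (simp_all add: is_tensor_def is_bimodule_def)

lemma tens_rules:
  "tens (x + x') y = tens x y + tens x' y" "tens x (y + y') = tens x y + tens x y'"
  "tens (rC x a) y = tens x (lC a y)"
  "lT a (tens x y) = tens (lC a x) y" "rT (tens x y) a = tens x (rC y a)"
  using tensor_CC by (simp_all add: is_tensor_def balanced_def)

lemma tensL_rules:
  "tensL (x + x') s = tensL x s + tensL x' s" "tensL x (s + s') = tensL x s + tensL x s'"
  "tensL (rC x a) s = tensL x (lT a s)"
  using tensor_CT by (simp_all add: is_tensor_def balanced_def)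

lemma Delta_hom:
  "\<Delta> (x + y) = \<Delta> x + \<Delta> y" "\<Delta> (lC a x) = lT a (\<Delta> x)" "\<Delta> (rC x a) = rT (\<Delta> x) a"
  using coring by (simp_all add: is_coring_def bimod_hom_def)

lemma counit_hom:
  "\<epsilon> (x + y) = \<epsilon> x + \<epsilon> y" "\<epsilon> (lC a x) = a * \<epsilon> x" "\<epsilon> (rC x a) = \<epsilon> x * a"
  using coring by (simp_all add: is_coring_def bimod_hom_def)

lemmas coring_simps = bimodule_C bimodule_T tens_rules tensL_rules Delta_hom counit_hom

lemma additive_lC: "additive (lC a)"
  by (simp add: additive_def bimodule_C)

lemma additive_rC: "additive (\<lambda>x. rC x a)"
  by (simp add: additive_def bimodule_C)

lemma additive_rT: "additive (\<lambda>t. rT t a)"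
  by (simp add: additive_def bimodule_T)

lemma additive_Delta: "additive \<Delta>"
  by (simp add: additive_def Delta_hom)

lemma additive_counit: "additive \<epsilon>"
  by (simp add: additive_def counit_hom)

lemma additive_tens_left: "additive (\<lambda>x. tens x y)"
  by (simp add: additive_def tens_rules)

lemma balanced_counit_right: "balanced rC lC (\<lambda>x y. rC x (\<epsilon> y))"
  by (simp add: balanced_def coring_simps)

lemma balanced_counit_left: "balanced rC lC (\<lambda>x y. lC (\<epsilon> x) y)"
  by (simp add: balanced_def coring_simps)

lemma balanced_tensL_Delta: "balanced rC lC (\<lambda>x y. tensL x (\<Delta> y))"
  by (simp add: balanced_def coring_simps)

lemma balanced_tensL_tens: "balanced rC lC (\<lambda>u v. tensL u (tens v y))"
  by (simp add: balanced_def coring_simps)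

lemma balanced_coassoc_rhs:
  "balanced rC lC (\<lambda>x y. tlift tens (\<lambda>u v. tensL u (tens v y)) (\<Delta> x))"
  unfolding balanced_def
proof (intro conjI allI)
  fix x x' y
  show "tlift tens (\<lambda>u v. tensL u (tens v y)) (\<Delta> (x + x')) =
        tlift tens (\<lambda>u v. tensL u (tens v y)) (\<Delta> x) + tlift tens (\<lambda>u v. tensL u (tens v y)) (\<Delta> x')"
    by (simp add: Delta_hom additive.add[OF additive_tlift[OF tensor_CC balanced_tensL_tens]])
next
  fix x y y'
  show "tlift tens (\<lambda>u v. tensL u (tens v (y + y'))) (\<Delta> x) =
        tlift tens (\<lambda>u v. tensL u (tens v y)) (\<Delta> x) + tlift tens (\<lambda>u v. tensL u (tens v y')) (\<Delta> x)"
    by (simp add: coring_simps tlift_add_fun[OF tensor_CC balanced_tensL_tens balanced_tensL_tens])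
next
  fix x a y
  show "tlift tens (\<lambda>u v. tensL u (tens v y)) (\<Delta> (rC x a)) =
        tlift tens (\<lambda>u v. tensL u (tens v (lC a y))) (\<Delta> x)"
    by (simp add: Delta_hom tlift_right_action[OF tensor_CC balanced_tensL_tens] tens_rules)
qed

text \<open>Coassociativity, transported along the map out of \<open>C \<otimes> (C \<otimes> C)\<close> induced by \<open>\<phi>\<close>.\<close>
lemma coassoc_balanced:
  assumes \<phi>: "balanced rC lT \<phi>"
  shows "tlift tens (\<lambda>x y. \<phi> x (\<Delta> y)) (\<Delta> c) =
         tlift tens (\<lambda>x y. tlift tens (\<lambda>u v. \<phi> u (tens v y)) (\<Delta> x)) (\<Delta> c)"
proof -
  let ?G = "tlift tensL \<phi>"
  have G: "additive ?G" and G_tensL: "?G (tensL x s) = \<phi> x s" for x s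
    by (rule additive_tlift[OF tensor_CT \<phi>]) (rule tlift_tens[OF tensor_CT \<phi>])
  have "tlift tens (\<lambda>x y. \<phi> x (\<Delta> y)) (\<Delta> c) = ?G (tlift tens (\<lambda>x y. tensL x (\<Delta> y)) (\<Delta> c))"
    by (simp add: tlift_comp[OF tensor_CC balanced_tensL_Delta G] G_tensL)
  also have "\<dots> = ?G (tlift tens (\<lambda>x y. tlift tens (\<lambda>u v. tensL u (tens v y)) (\<Delta> x)) (\<Delta> c))"
    by (simp only: coassoc)
  also have "\<dots> = tlift tens (\<lambda>x y. tlift tens (\<lambda>u v. \<phi> u (tens v y)) (\<Delta> x)) (\<Delta> c)"
    by (simp add: tlift_comp[OF tensor_CC balanced_coassoc_rhs G]
        tlift_comp[OF tensor_CC balanced_tensL_tens G] G_tensL)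
  finally show ?thesis .
qed

definition frobenius_mult :: "('t \<Rightarrow> 'a) \<Rightarrow> 't \<Rightarrow> 'c" where
  "frobenius_mult \<gamma> = tlift tens (\<lambda>c c'. tlift tens (\<lambda>x y. rC x (\<gamma> (tens y c'))) (\<Delta> c))"

end

section \<open>From reduced Frobenius systems to pairs\<close>

locale coring_frobenius_system = coring +
  fixes \<gamma> and e
  assumes frobenius_system: "reduced_frobenius_system lC rC lT rT tens \<Delta> \<epsilon> \<gamma> e"
begin

lemma e_central: "lC a e = rC e a"
  using frobenius_system by (simp add: reduced_frobenius_system_def)

lemma gamma_hom: "\<gamma> (s + t) = \<gamma> s + \<gamma> t" "\<gamma> (lT a t) = a * \<gamma> t" "\<gamma> (rT t a) = \<gamma> t * a"
  using frobenius_system by (simp_all add: reduced_frobenius_system_def bimod_hom_def)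

lemma gamma_tens: "\<gamma> (tens (lC a x) y) = a * \<gamma> (tens x y)" "\<gamma> (tens x (rC y a)) = \<gamma> (tens x y) * a"
  using gamma_hom(2)[of a "tens x y"] gamma_hom(3)[of "tens x y" a] by (simp_all add: tens_rules)

lemma frobenius_condition:
  "tlift tens (\<lambda>x y. rC x (\<gamma> (tens y c'))) (\<Delta> c) = tlift tens (\<lambda>x y. lC (\<gamma> (tens c x)) y) (\<Delta> c')"
  using frobenius_system by (simp add: reduced_frobenius_system_def)

lemma gamma_e: "\<gamma> (tens c e) = \<epsilon> c" "\<gamma> (tens e c) = \<epsilon> c"
  using frobenius_system by (simp_all add: reduced_frobenius_system_def)

lemma balanced_gamma_right: "balanced rC lC (\<lambda>x y. rC x (\<gamma> (tens y c')))"
  by (simp add: balanced_def coring_simps gamma_hom gamma_tens)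

lemma balanced_gamma_left: "balanced rC lC (\<lambda>x y. lC (\<gamma> (tens c x)) y)"
  by (simp add: balanced_def coring_simps gamma_hom gamma_tens)

lemma tlift_gamma_right_lT:
  "tlift tens (\<lambda>x y. rC x (\<gamma> (tens y c'))) (lT a t) = lC a (tlift tens (\<lambda>x y. rC x (\<gamma> (tens y c'))) t)"
  by (simp add: tlift_left_action[OF tensor_CC balanced_gamma_right] bimodule_C
      tlift_comp[OF tensor_CC balanced_gamma_right additive_lC])

lemma balanced_frobenius_mult:
  "balanced rC lC (\<lambda>c c'. tlift tens (\<lambda>x y. rC x (\<gamma> (tens y c'))) (\<Delta> c))"
  unfolding balanced_def
proof (intro conjI allI)
  fix x x' y
  show "tlift tens (\<lambda>u v. rC u (\<gamma> (tens v y))) (\<Delta> (x + x')) =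
        tlift tens (\<lambda>u v. rC u (\<gamma> (tens v y))) (\<Delta> x) + tlift tens (\<lambda>u v. rC u (\<gamma> (tens v y))) (\<Delta> x')"
    by (simp add: Delta_hom additive.add[OF additive_tlift[OF tensor_CC balanced_gamma_right]])
next
  fix x y y'
  show "tlift tens (\<lambda>u v. rC u (\<gamma> (tens v (y + y')))) (\<Delta> x) =
        tlift tens (\<lambda>u v. rC u (\<gamma> (tens v y))) (\<Delta> x) + tlift tens (\<lambda>u v. rC u (\<gamma> (tens v y'))) (\<Delta> x)"
    by (simp add: coring_simps gamma_hom tlift_add_fun[OF tensor_CC balanced_gamma_right balanced_gamma_right])
next
  fix x a y
  show "tlift tens (\<lambda>u v. rC u (\<gamma> (tens v y))) (\<Delta> (rC x a)) =
        tlift tens (\<lambda>u v. rC u (\<gamma> (tens v (lC a y)))) (\<Delta> x)"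
    by (simp add: Delta_hom tlift_right_action[OF tensor_CC balanced_gamma_right] tens_rules)
qed

lemma frobenius_mult_tens:
  "frobenius_mult \<gamma> (tens c c') = tlift tens (\<lambda>x y. rC x (\<gamma> (tens y c'))) (\<Delta> c)"
  unfolding frobenius_mult_def by (rule tlift_tens[OF tensor_CC balanced_frobenius_mult])

lemma frobenius_mult_tens':
  "frobenius_mult \<gamma> (tens c c') = tlift tens (\<lambda>x y. lC (\<gamma> (tens c x)) y) (\<Delta> c')"
  by (simp add: frobenius_mult_tens frobenius_condition)

lemma additive_frobenius_mult: "additive (frobenius_mult \<gamma>)"
  unfolding frobenius_mult_def by (rule additive_tlift[OF tensor_CC balanced_frobenius_mult])

lemma frobenius_mult_bimod_hom: "bimod_hom lT rT lC rC (frobenius_mult \<gamma>)"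
  unfolding bimod_hom_def
proof (intro conjI allI)
  fix s t
  show "frobenius_mult \<gamma> (s + t) = frobenius_mult \<gamma> s + frobenius_mult \<gamma> t"
    by (rule additive.add[OF additive_frobenius_mult])
next
  fix a t
  show "frobenius_mult \<gamma> (lT a t) = lC a (frobenius_mult \<gamma> t)"
    by (rule tensor_additive_ext[OF tensor_CC
          additive_comp[OF additive_frobenius_mult additive_tensor_actions(1)[OF tensor_CC]]
          additive_comp[OF additive_lC additive_frobenius_mult]])
      (simp add: tens_rules frobenius_mult_tens Delta_hom tlift_gamma_right_lT)
next
  fix t a
  show "frobenius_mult \<gamma> (rT t a) = rC (frobenius_mult \<gamma> t) a"
    by (rule tensor_additive_ext[OF tensor_CC
          additive_comp[OF additive_frobenius_mult additive_rT]
          additive_comp[OF additive_rC additive_frobenius_mult]])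
      (simp add: tens_rules frobenius_mult_tens coring_simps gamma_tens
        tlift_comp[OF tensor_CC balanced_gamma_right additive_rC])
qed

lemma frobenius_mult_colinear_left:
  "tlift tens (\<lambda>x y. tens x (frobenius_mult \<gamma> (tens y c'))) (\<Delta> c) = \<Delta> (frobenius_mult \<gamma> (tens c c'))"
proof -
  let ?P = "tlift tens (\<lambda>x y. rC x (\<gamma> (tens y c')))"
  have \<phi>: "balanced rC lT (\<lambda>x t. tens x (?P t))"
    by (simp add: balanced_def tens_rules tlift_gamma_right_lT
        additive.add[OF additive_tlift[OF tensor_CC balanced_gamma_right]])
  have "tlift tens (\<lambda>u v. tens u (?P (tens v y))) (\<Delta> x) = \<Delta> (rC x (\<gamma> (tens y c')))" for x y
    by (simp add: tlift_tens[OF tensor_CC balanced_gamma_right] Delta_hom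
        tlift_unique[OF tensor_CC additive_rT] tens_rules)
  then show ?thesis
    using coassoc_balanced[OF \<phi>, of c]
    by (simp add: frobenius_mult_tens tlift_comp[OF tensor_CC balanced_gamma_right additive_Delta])
qed

lemma frobenius_mult_colinear_right:
  "\<Delta> (frobenius_mult \<gamma> (tens c c')) = tlift tens (\<lambda>x y. tens (frobenius_mult \<gamma> (tens c x)) y) (\<Delta> c')"
proof -
  have \<phi>: "balanced rC lT (\<lambda>x t. lT (\<gamma> (tens c x)) t)"
    by (simp add: balanced_def coring_simps gamma_hom gamma_tens)
  show ?thesis
    using coassoc_balanced[OF \<phi>, of c']
    by (simp add: frobenius_mult_tens' coring_simps
        tlift_comp[OF tensor_CC balanced_gamma_left additive_Delta]
        tlift_comp[OF tensor_CC balanced_gamma_left additive_tens_left])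
qed

lemma frobenius_mult_e: "frobenius_mult \<gamma> (tens c e) = c" "frobenius_mult \<gamma> (tens e c) = c"
  by (simp only: frobenius_mult_tens gamma_e counit_right)
    (simp only: frobenius_mult_tens' gamma_e counit_left)

lemma counit_frobenius_mult: "\<epsilon> \<circ> frobenius_mult \<gamma> = \<gamma>"
proof
  fix t
  have additive_gamma: "additive \<gamma>"
    by (simp add: additive_def gamma_hom)
  have additive_gamma_tens: "additive (\<lambda>x. \<gamma> (tens c x))" for c
    by (simp add: additive_def gamma_hom tens_rules)
  have "\<epsilon> (frobenius_mult \<gamma> t) = \<gamma> t"
  proof (rule tensor_additive_ext[OF tensor_CC
        additive_comp[OF additive_counit additive_frobenius_mult] additive_gamma])
    fix c c'
    have "\<epsilon> (frobenius_mult \<gamma> (tens c c')) = tlift tens (\<lambda>x y. \<gamma> (tens c (rC x (\<epsilon> y)))) (\<Delta> c')"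
      by (simp add: frobenius_mult_tens' tlift_comp[OF tensor_CC balanced_gamma_left additive_counit]
          counit_hom gamma_tens)
    also have "\<dots> = \<gamma> (tens c c')"
      by (simp add: counit_right flip: tlift_comp[OF tensor_CC balanced_counit_right additive_gamma_tens])
    finally show "\<epsilon> (frobenius_mult \<gamma> (tens c c')) = \<gamma> (tens c c')" .
  qed
  then show "(\<epsilon> \<circ> frobenius_mult \<gamma>) t = \<gamma> t"
    by simp
qed

lemma pi_theta_pair_frobenius_mult:
  "pi_theta_pair lC rC lT rT tens \<Delta> (frobenius_mult \<gamma>) (\<lambda>a. lC a e)"
proof -
  have "bimod_hom (*) (*) lC rC (\<lambda>a. lC a e)"
    by (simp add: bimod_hom_def bimodule_C e_central flip: bimodule_C(9))
  then show ?thesis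
    by (simp add: pi_theta_pair_def frobenius_mult_bimod_hom frobenius_mult_colinear_left
        frobenius_mult_colinear_right frobenius_mult_e bimodule_C(4))
qed

end

section \<open>From pairs to reduced Frobenius systems\<close>

locale coring_pi_theta = coring +
  fixes \<pi> and \<Theta>
  assumes pi_theta: "pi_theta_pair lC rC lT rT tens \<Delta> \<pi> \<Theta>"
begin

lemma pi_hom: "\<pi> (s + t) = \<pi> s + \<pi> t" "\<pi> (lT a t) = lC a (\<pi> t)" "\<pi> (rT t a) = rC (\<pi> t) a"
  using pi_theta by (simp_all add: pi_theta_pair_def bimod_hom_def)

lemma Theta_hom: "\<Theta> (a * b) = lC a (\<Theta> b)" "\<Theta> (a * b) = rC (\<Theta> a) b"
  using pi_theta unfolding pi_theta_pair_def bimod_hom_def by blast+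

lemma pi_colinear:
  "tlift tens (\<lambda>x y. tens x (\<pi> (tens y c'))) (\<Delta> c) = \<Delta> (\<pi> (tens c c'))"
  "\<Delta> (\<pi> (tens c c')) = tlift tens (\<lambda>x y. tens (\<pi> (tens c x)) y) (\<Delta> c')"
  using pi_theta by (simp_all add: pi_theta_pair_def)

lemma pi_Theta_unit: "\<pi> (tens c (\<Theta> 1)) = c" "\<pi> (tens (\<Theta> 1) c) = c"
  using pi_theta by (simp_all add: pi_theta_pair_def)

lemma pi_tens: "\<pi> (tens (lC a x) y) = lC a (\<pi> (tens x y))" "\<pi> (tens x (rC y a)) = rC (\<pi> (tens x y)) a"
  using pi_hom(2)[of a "tens x y"] pi_hom(3)[of "tens x y" a] by (simp_all add: tens_rules)

lemma pi_tens_counit_right: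
  "\<pi> (tens c c') = tlift tens (\<lambda>x y. rC x (\<epsilon> (\<pi> (tens y c')))) (\<Delta> c)"
proof -
  let ?\<kappa> = "tlift tens (\<lambda>x y. rC x (\<epsilon> y))"
  have \<phi>: "balanced rC lC (\<lambda>x y. tens x (\<pi> (tens y c')))"
    by (simp add: balanced_def tens_rules pi_hom pi_tens)
  have "\<pi> (tens c c') = ?\<kappa> (\<Delta> (\<pi> (tens c c')))"
    by (simp only: counit_right)
  also have "\<dots> = ?\<kappa> (tlift tens (\<lambda>x y. tens x (\<pi> (tens y c'))) (\<Delta> c))"
    by (simp only: pi_colinear(1))
  also have "\<dots> = tlift tens (\<lambda>x y. rC x (\<epsilon> (\<pi> (tens y c')))) (\<Delta> c)"
    by (simp only: tlift_comp[OF tensor_CC \<phi> additive_tlift[OF tensor_CC balanced_counit_right]]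
        tlift_tens[OF tensor_CC balanced_counit_right])
  finally show ?thesis .
qed

lemma pi_tens_counit_left:
  "\<pi> (tens c c') = tlift tens (\<lambda>x y. lC (\<epsilon> (\<pi> (tens c x))) y) (\<Delta> c')"
proof -
  let ?\<kappa> = "tlift tens (\<lambda>x y. lC (\<epsilon> x) y)"
  have \<phi>: "balanced rC lC (\<lambda>x y. tens (\<pi> (tens c x)) y)"
    by (simp add: balanced_def tens_rules pi_hom pi_tens)
  have "\<pi> (tens c c') = ?\<kappa> (\<Delta> (\<pi> (tens c c')))"
    by (simp only: counit_left)
  also have "\<dots> = ?\<kappa> (tlift tens (\<lambda>x y. tens (\<pi> (tens c x)) y) (\<Delta> c'))"
    by (simp only: pi_colinear(2))
  also have "\<dots> = tlift tens (\<lambda>x y. lC (\<epsilon> (\<pi> (tens c x))) y) (\<Delta> c')"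
    by (simp only: tlift_comp[OF tensor_CC \<phi> additive_tlift[OF tensor_CC balanced_counit_left]]
        tlift_tens[OF tensor_CC balanced_counit_left])
  finally show ?thesis .
qed

lemma reduced_frobenius_system_counit_pi:
  "reduced_frobenius_system lC rC lT rT tens \<Delta> \<epsilon> (\<epsilon> \<circ> \<pi>) (\<Theta> 1)"
  unfolding reduced_frobenius_system_def
proof (intro conjI allI)
  show "lC a (\<Theta> 1) = rC (\<Theta> 1) a" for a
    using Theta_hom(1)[of a 1] Theta_hom(2)[of 1 a] by simp
  show "bimod_hom lT rT (*) (*) (\<epsilon> \<circ> \<pi>)"
    by (simp add: bimod_hom_def pi_hom counit_hom)
  show "tlift tens (\<lambda>x y. rC x ((\<epsilon> \<circ> \<pi>) (tens y c'))) (\<Delta> c) =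
        tlift tens (\<lambda>x y. lC ((\<epsilon> \<circ> \<pi>) (tens c x)) y) (\<Delta> c')" for c c'
    using pi_tens_counit_right[of c c'] pi_tens_counit_left[of c c'] by simp
qed (simp_all add: pi_Theta_unit)

lemma frobenius_mult_counit_pi: "frobenius_mult (\<epsilon> \<circ> \<pi>) = \<pi>"
proof
  interpret frobenius: coring_frobenius_system lC rC lT rT tens lL rL tensL \<Delta> \<epsilon> "\<epsilon> \<circ> \<pi>" "\<Theta> 1"
    by unfold_locales (rule reduced_frobenius_system_counit_pi)
  have "additive \<pi>"
    by (simp add: additive_def pi_hom)
  then show "frobenius_mult (\<epsilon> \<circ> \<pi>) t = \<pi> t" for t
  proof (rule tensor_additive_ext[OF tensor_CC frobenius.additive_frobenius_mult])
    show "frobenius_mult (\<epsilon> \<circ> \<pi>) (tens c c') = \<pi> (tens c c')" for c c'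
      by (simp only: frobenius.frobenius_mult_tens pi_tens_counit_right[of c c'] comp_apply)
  qed
qed

lemma lC_Theta_one_eq_Theta: "(\<lambda>a. lC a (\<Theta> 1)) = \<Theta>"
proof
  show "lC a (\<Theta> 1) = \<Theta> a" for a
    using Theta_hom(1)[of a 1] by simp
qed

end

theorem lemma2p4:
  fixes lC :: "'a::ring_1 \<Rightarrow> 'c::ab_group_add \<Rightarrow> 'c" and rC :: "'c \<Rightarrow> 'a \<Rightarrow> 'c"
    and lT :: "'a \<Rightarrow> 't::ab_group_add \<Rightarrow> 't" and rT :: "'t \<Rightarrow> 'a \<Rightarrow> 't"
    and tens :: "'c \<Rightarrow> 'c \<Rightarrow> 't"
    and lL :: "'a \<Rightarrow> 'l::ab_group_add \<Rightarrow> 'l" and rL :: "'l \<Rightarrow> 'a \<Rightarrow> 'l"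
    and tensL :: "'c \<Rightarrow> 't \<Rightarrow> 'l"
    and \<Delta> :: "'c \<Rightarrow> 't" and \<epsilon> :: "'c \<Rightarrow> 'a"
  assumes "is_coring lC rC lT rT tens lL rL tensL \<Delta> \<epsilon>"
  shows "bij_betw (\<lambda>(\<pi>, \<Theta>). (\<epsilon> \<circ> \<pi>, \<Theta> 1))
           {(\<pi>, \<Theta>). pi_theta_pair lC rC lT rT tens \<Delta> \<pi> \<Theta>}
           {(\<gamma>, e). reduced_frobenius_system lC rC lT rT tens \<Delta> \<epsilon> \<gamma> e}"
proof -
  interpret coring lC rC lT rT tens lL rL tensL \<Delta> \<epsilon>
    by (rule coring.intro) (fact assms)
  have pair: "reduced_frobenius_system lC rC lT rT tens \<Delta> \<epsilon> (\<epsilon> \<circ> \<pi>) (\<Theta> 1)"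
    "frobenius_mult (\<epsilon> \<circ> \<pi>) = \<pi>" "(\<lambda>a. lC a (\<Theta> 1)) = \<Theta>"
    if "pi_theta_pair lC rC lT rT tens \<Delta> \<pi> \<Theta>" for \<pi> \<Theta>
  proof -
    interpret coring_pi_theta lC rC lT rT tens lL rL tensL \<Delta> \<epsilon> \<pi> \<Theta>
      by unfold_locales (fact that)
    show "reduced_frobenius_system lC rC lT rT tens \<Delta> \<epsilon> (\<epsilon> \<circ> \<pi>) (\<Theta> 1)"
      "frobenius_mult (\<epsilon> \<circ> \<pi>) = \<pi>" "(\<lambda>a. lC a (\<Theta> 1)) = \<Theta>"
      by (rule reduced_frobenius_system_counit_pi frobenius_mult_counit_pi lC_Theta_one_eq_Theta)+
  qed
  have frobenius: "pi_theta_pair lC rC lT rT tens \<Delta> (frobenius_mult \<gamma>) (\<lambda>a. lC a e)"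
    "\<epsilon> \<circ> frobenius_mult \<gamma> = \<gamma>"
    if "reduced_frobenius_system lC rC lT rT tens \<Delta> \<epsilon> \<gamma> e" for \<gamma> e
  proof -
    interpret coring_frobenius_system lC rC lT rT tens lL rL tensL \<Delta> \<epsilon> \<gamma> e
      by unfold_locales (fact that)
    show "pi_theta_pair lC rC lT rT tens \<Delta> (frobenius_mult \<gamma>) (\<lambda>a. lC a e)"
      "\<epsilon> \<circ> frobenius_mult \<gamma> = \<gamma>"
      by (rule pi_theta_pair_frobenius_mult counit_frobenius_mult)+
  qed
  show ?thesis
    by (rule bij_betw_byWitness[where f' = "\<lambda>(\<gamma>, e). (frobenius_mult \<gamma>, \<lambda>a. lC a e)"])
      (auto simp: pair frobenius bimodule_C(4))
qed

end
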